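(* Let $n\ge2$, $y\in\{1,\dots,n-1\}$, $L_b=n-y+1$, and $0\le a<1$. Let $A\in\mathbb{R}^{n\times n}$ be the stem-bud network with all edge weights equal to $a$, i.e., $a_{q+1,q}=a$ for $q=1,\dots,n-1$, $a_{yn}=a$, and all other entries zero, and consider the single input $B=e_1$ and time horizon $T$ (a positive integer). Then: (i) if $w>0$ is added to the weight of a single edge of the bud (one of the edges $q\to q+1$ with $y\le q\le n-1$, or $n\to y$), the modified network has spectral radius less than $1$ provided $0<w<\frac{1-a^{L_b}}{a^{L_b-1}}$ (with no upper restriction if $a=0$); (ii) $\operatorname{tr}(\mathcal{W}_A)\le\sum_{k=0}^{y-2}a^{2k}+\sum_{k=y-1}^{n-1}\frac{a^{2k}}{(1-a^{L_b})^2}$, where $\mathcal{W}_A=\sum_{t=0}^{T-1}A^te_1e_1^{\top}(A^t)^{\top}$.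
   Context: $e_k$ is the $k$-th canonical unit vector; $a_{pq}$ is the weight of edge $q\to p$; the bud of the stem-bud network is the cycle $y\to y+1\to\cdots\to n\to y$, of length $L_b$. *)

theory Defs
  imports "Jordan_Normal_Form.Spectral_Radius"
begin

text \<open>Indices are 0-based: paper node p corresponds to index p-1.
  Entry (i,j) of a matrix is the weight of the edge from node j+1 to node i+1.\<close>

definition stem_bud :: "nat \<Rightarrow> nat \<Rightarrow> real \<Rightarrow> real mat" where
  "stem_bud n y a = mat n n (\<lambda>(i,j).
      if i = j + 1 \<or> (i = y - 1 \<and> j = n - 1) then a else 0)"

text \<open>Bud edges (0-based entries): q -> q+1 for y <= q <= n-1, i.e. entry (q, q-1);
  and n -> y, i.e. entry (y-1, n-1).\<close>
definition bud_edge :: "nat \<Rightarrow> nat \<Rightarrow> nat \<times> nat \<Rightarrow> bool" where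
  "bud_edge n y e = ((\<exists>q. y \<le> q \<and> q \<le> n - 1 \<and> e = (q, q - 1)) \<or> e = (y - 1, n - 1))"

definition add_edge_weight :: "real mat \<Rightarrow> nat \<times> nat \<Rightarrow> real \<Rightarrow> real mat" where
  "add_edge_weight A e w = mat (dim_row A) (dim_col A) (\<lambda>ij. if ij = e then A $$ ij + w else A $$ ij)"

definition mat_trace :: "'a::comm_monoid_add mat \<Rightarrow> 'a" where
  "mat_trace A = (\<Sum>i<dim_row A. A $$ (i,i))"

definition ctrb_gramian :: "real mat \<Rightarrow> real mat \<Rightarrow> nat \<Rightarrow> real mat" where
  "ctrb_gramian A B T = mat (dim_row A) (dim_row A) (\<lambda>ij.
      \<Sum>t<T. ((A ^\<^sub>m t) * B * transpose_mat B * transpose_mat (A ^\<^sub>m t)) $$ ij)"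

end

theory Submission
  imports Defs
begin

text \<open>Let L be the length of the bud. If \<lambda> \<noteq> 0 is an eigenvalue of a matrix supported on the
  stem-bud graph, its eigenvector vanishes on the stem, and along the bud each coordinate is the
  previous one times the edge weight divided by \<lambda>; going once around the cycle gives
  \<lambda>^L = (product of the bud weights), which after adding w to one bud edge is a^(L-1) (a + w) < 1.
  For the Gramian, A^t e_1 = a^t e_q for the node q reached after t steps, so its trace is
  \<Sum>t<T. a^(2t) \<le> 1 / (1 - a^2); splitting this geometric series where the bud starts and using
  (1 - a^L)^2 \<le> 1 - a^(2L) on the bud block gives the bound.\<close>

definition stem_bud_supported :: "nat \<Rightarrow> nat \<Rightarrow> 'a::zero mat \<Rightarrow> bool" where
  "stem_bud_supported n y M \<longleftrightarrow>
     (\<forall>i<n. \<forall>j<n. M $$ (i, j) \<noteq> 0 \<longrightarrow> i = j + 1 \<or> (i = y - 1 \<and> j = n - 1))"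

definition bud_cycle_weight :: "nat \<Rightarrow> nat \<Rightarrow> 'a::comm_monoid_mult mat \<Rightarrow> 'a" where
  "bud_cycle_weight n y M = M $$ (y - 1, n - 1) * (\<Prod>i\<in>{y..<n}. M $$ (i, i - 1))"

lemma stem_bud_supportedD:
  "stem_bud_supported n y M \<Longrightarrow> i < n \<Longrightarrow> j < n \<Longrightarrow> \<not> (i = j + 1 \<or> (i = y - 1 \<and> j = n - 1))
    \<Longrightarrow> M $$ (i, j) = 0"
  unfolding stem_bud_supported_def by blast

lemma stem_bud_supported_mult_vec_nth:
  fixes M :: "'a::comm_ring_1 mat"
  assumes M: "M \<in> carrier_mat n n" "stem_bud_supported n y M"
    and v: "v \<in> carrier_vec n" and i: "i < n"
  shows "(M *\<^sub>v v) $ i = (if 1 \<le> i then M $$ (i, i - 1) * v $ (i - 1) else 0)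
           + (if i = y - 1 then M $$ (y - 1, n - 1) * v $ (n - 1) else 0)"
proof -
  have "(M *\<^sub>v v) $ i = (\<Sum>j<n. M $$ (i, j) * v $ j)"
    using M v i by (auto simp: scalar_prod_def atLeast0LessThan)
  also have "\<dots> = (\<Sum>j<n. (if j = i - 1 \<and> 1 \<le> i then M $$ (i, i - 1) * v $ (i - 1) else 0)
                        + (if j = n - 1 \<and> i = y - 1 then M $$ (y - 1, n - 1) * v $ (n - 1) else 0))"
  proof (rule sum.cong[OF refl])
    fix j assume "j \<in> {..<n}"
    then show "M $$ (i, j) * v $ j = (if j = i - 1 \<and> 1 \<le> i then M $$ (i, i - 1) * v $ (i - 1) else 0)
                        + (if j = n - 1 \<and> i = y - 1 then M $$ (y - 1, n - 1) * v $ (n - 1) else 0)"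
      using stem_bud_supportedD[OF M(2) i, of j] i by (cases "i = 0") auto
  qed
  also have "\<dots> = (if 1 \<le> i then M $$ (i, i - 1) * v $ (i - 1) else 0)
           + (if i = y - 1 then M $$ (y - 1, n - 1) * v $ (n - 1) else 0)"
    using i by (auto simp: sum.distrib)
  finally show ?thesis .
qed

lemma stem_bud_supported_eigenvector_nth:
  fixes M :: "'a::comm_ring_1 mat"
  assumes M: "M \<in> carrier_mat n n" "stem_bud_supported n y M"
    and ev: "eigenvector M v l" and i: "i < n"
  shows "l * v $ i = (if 1 \<le> i then M $$ (i, i - 1) * v $ (i - 1) else 0)
           + (if i = y - 1 then M $$ (y - 1, n - 1) * v $ (n - 1) else 0)"
proof -
  have v: "v \<in> carrier_vec n" and "M *\<^sub>v v = l \<cdot>\<^sub>v v"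
    using ev M(1) unfolding eigenvector_def by auto
  then have "l * v $ i = (M *\<^sub>v v) $ i"
    using i by simp
  also have "\<dots> = (if 1 \<le> i then M $$ (i, i - 1) * v $ (i - 1) else 0)
           + (if i = y - 1 then M $$ (y - 1, n - 1) * v $ (n - 1) else 0)"
    by (rule stem_bud_supported_mult_vec_nth[OF M v i])
  finally show ?thesis .
qed

lemma stem_bud_supported_eigenvector_stem:
  fixes M :: "'a::idom mat"
  assumes M: "M \<in> carrier_mat n n" "stem_bud_supported n y M"
    and ev: "eigenvector M v l" and l: "l \<noteq> 0" and y: "y \<le> n"
  shows "i < y - 1 \<Longrightarrow> v $ i = 0"
proof (induction i)
  case 0
  then show ?case
    using stem_bud_supported_eigenvector_nth[OF M ev, of 0] y l by simp
next
  case (Suc i)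
  then show ?case
    using stem_bud_supported_eigenvector_nth[OF M ev, of "Suc i"] y l by simp
qed

lemma stem_bud_supported_eigenvector_bud:
  fixes M :: "'a::idom mat"
  assumes M: "M \<in> carrier_mat n n" "stem_bud_supported n y M"
    and ev: "eigenvector M v l" and y: "1 \<le> y"
  shows "y - 1 + k < n \<Longrightarrow> l ^ k * v $ (y - 1 + k) = (\<Prod>i\<in>{y..<y + k}. M $$ (i, i - 1)) * v $ (y - 1)"
proof (induction k)
  case 0
  then show ?case
    by simp
next
  case (Suc k)
  have "l * v $ (y + k) = M $$ (y + k, y - 1 + k) * v $ (y - 1 + k)"
    using stem_bud_supported_eigenvector_nth[OF M ev, of "y + k"] Suc.prems y by simp
  then have "l ^ Suc k * v $ (y - 1 + Suc k) = M $$ (y + k, y - 1 + k) * (l ^ k * v $ (y - 1 + k))"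
    using y by (simp add: algebra_simps)
  also have "\<dots> = (\<Prod>i\<in>{y..<y + Suc k}. M $$ (i, i - 1)) * v $ (y - 1)"
    using Suc y by (simp add: prod.atLeastLessThan_Suc algebra_simps)
  finally show ?case .
qed

lemma stem_bud_supported_eigenvalue_pow:
  fixes M :: "'a::idom mat"
  assumes M: "M \<in> carrier_mat n n" "stem_bud_supported n y M"
    and y: "1 \<le> y" "y \<le> n"
    and ev: "eigenvector M v l" and l: "l \<noteq> 0"
  shows "l ^ (n - y + 1) = bud_cycle_weight n y M"
proof -
  note stem = stem_bud_supported_eigenvector_stem[OF M ev l y(2)]
  note bud = stem_bud_supported_eigenvector_bud[OF M ev y(1)]
  have nonzero: "v $ (y - 1) \<noteq> 0"
  proof
    assume "v $ (y - 1) = 0"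
    then have "v $ i = 0" if "i < n" for i
      using stem[of i] bud[of "i - (y - 1)"] l that by (cases "i < y - 1") auto
    then show False
      using ev M(1) unfolding eigenvector_def by (auto intro: eq_vecI)
  qed
  have "l * v $ (y - 1) = M $$ (y - 1, n - 1) * v $ (n - 1)"
    using stem_bud_supported_eigenvector_nth[OF M ev, of "y - 1"] stem[of "y - 1 - 1"] y
    by (cases "y = 1") auto
  then have "l ^ (n - y + 1) * v $ (y - 1) = M $$ (y - 1, n - 1) * (l ^ (n - y) * v $ (y - 1 + (n - y)))"
    using y by (simp add: algebra_simps)
  also have "\<dots> = bud_cycle_weight n y M * v $ (y - 1)"
    using bud[of "n - y"] y unfolding bud_cycle_weight_def by (simp add: algebra_simps)
  finally show ?thesis
    using nonzero by simp
qed

lemma spectral_radius_stem_bud_supported_less_1: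
  fixes A :: "real mat"
  assumes A: "A \<in> carrier_mat n n" "stem_bud_supported n y A"
    and y: "1 \<le> y" "y \<le> n" and cycle: "\<bar>bud_cycle_weight n y A\<bar> < 1"
  shows "spectral_radius (map_mat complex_of_real A) < 1"
proof -
  define M where "M = map_mat complex_of_real A"
  have M: "M \<in> carrier_mat n n" "stem_bud_supported n y M"
    using A unfolding M_def stem_bud_supported_def by auto
  have "(\<Prod>i\<in>{y..<n}. M $$ (i, i - 1)) = (\<Prod>i\<in>{y..<n}. complex_of_real (A $$ (i, i - 1)))"
    using A(1) unfolding M_def by (intro prod.cong) auto
  then have cycle_M: "bud_cycle_weight n y M = complex_of_real (bud_cycle_weight n y A)"
    using A(1) y unfolding bud_cycle_weight_def M_def by simp
  obtain l where l: "l \<in> spectrum M" "spectral_radius M = cmod l"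
    using spectral_radius_mem_max(1)[OF M(1)] y by auto
  show ?thesis
  proof (cases "l = 0")
    case False
    obtain v where "eigenvector M v l"
      using l(1) unfolding spectrum_def eigenvalue_def by auto
    then have "l ^ (n - y + 1) = complex_of_real (bud_cycle_weight n y A)"
      using stem_bud_supported_eigenvalue_pow[OF M y] False cycle_M by simp
    then have "cmod l ^ (n - y + 1) = \<bar>bud_cycle_weight n y A\<bar>"
      by (metis norm_of_real norm_power)
    then have "cmod l ^ (n - y + 1) < 1 ^ (n - y + 1)"
      using cycle by simp
    then have "cmod l < 1"
      by (rule power_less_imp_less_base) simp
    then show ?thesis
      using l(2) unfolding M_def by simp
  qed (use l(2) in \<open>simp add: M_def\<close>)
qed

lemma stem_bud_supported_add_bud_edge:
  assumes "bud_edge n y e" "1 \<le> y"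
  shows "stem_bud_supported n y (add_edge_weight (stem_bud n y a) e w)"
  using assms unfolding stem_bud_supported_def bud_edge_def add_edge_weight_def stem_bud_def
  by auto

lemma add_edge_weight_stem_bud_nth:
  assumes "i < n" "j < n" "i = j + 1 \<or> (i = y - 1 \<and> j = n - 1)"
  shows "add_edge_weight (stem_bud n y a) e w $$ (i, j) = (if (i, j) = e then a + w else a)"
  using assms unfolding add_edge_weight_def stem_bud_def by auto

lemma bud_cycle_weight_add_bud_edge:
  assumes e: "bud_edge n y e" and y: "1 \<le> y" "y < n"
  shows "bud_cycle_weight n y (add_edge_weight (stem_bud n y a) e w) = a ^ (n - y) * (a + w)"
proof -
  let ?A = "add_edge_weight (stem_bud n y a) e w"
  have stem_entries:
    "(\<Prod>i\<in>{y..<n}. ?A $$ (i, i - 1)) = (\<Prod>i\<in>{y..<n}. if (i, i - 1) = e then a + w else a)"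
    using y by (intro prod.cong) (auto simp: add_edge_weight_stem_bud_nth)
  have closing_entry: "?A $$ (y - 1, n - 1) = (if e = (y - 1, n - 1) then a + w else a)"
    using y by (auto simp: add_edge_weight_stem_bud_nth)
  from e y consider (stem) q where "y \<le> q" "q < n" "e = (q, q - 1)" | (closing) "e = (y - 1, n - 1)"
    unfolding bud_edge_def by fastforce
  then show ?thesis
  proof cases
    case stem
    then have "e \<noteq> (y - 1, n - 1)"
      using y by auto
    then have "bud_cycle_weight n y ?A = a * (\<Prod>i\<in>{y..<n}. if (i, i - 1) = e then a + w else a)"
      unfolding bud_cycle_weight_def stem_entries closing_entry by simp
    also have "\<dots> = a * (\<Prod>i\<in>{y..<n}. if i = q then a + w else a)"
      using stem y by (intro arg_cong[where f = "(*) a"] prod.cong) auto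
    also have "\<dots> = a * ((a + w) * a ^ (n - y - 1))"
      using stem by (simp add: prod_gen_delta)
    also have "\<dots> = a ^ (n - y) * (a + w)"
      using y by (simp add: power_Suc[symmetric] Suc_diff_Suc del: power_Suc)
    finally show ?thesis .
  next
    case closing
    have "(\<Prod>i\<in>{y..<n}. if (i, i - 1) = e then a + w else a) = (\<Prod>i\<in>{y..<n}. a)"
      using closing y by (intro prod.cong) auto
    then show ?thesis
      using closing unfolding bud_cycle_weight_def stem_entries closing_entry by simp
  qed
qed

lemma power_mult_add_less_one:
  fixes a w :: real
  assumes a: "0 \<le> a" and w: "0 \<le> w" and m: "0 < m"
    and bound: "a = 0 \<or> w < (1 - a ^ (m + 1)) / a ^ m"
  shows "\<bar>a ^ m * (a + w)\<bar> < 1"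
proof (cases "a = 0")
  case False
  then have "0 < a ^ m"
    using a by simp
  then have "a ^ m * w < 1 - a ^ (m + 1)"
    using bound False by (simp add: pos_less_divide_eq mult.commute)
  then show ?thesis
    using a w by (simp add: algebra_simps)
qed (use m in \<open>simp add: zero_power\<close>)

lemma spectral_radius_stem_bud_add_bud_edge_less_1:
  fixes a w :: real
  assumes y: "1 \<le> y" "y < n" and a: "0 \<le> a" and e: "bud_edge n y e" and w: "0 < w"
    and bound: "a = 0 \<or> w < (1 - a ^ (n - y + 1)) / a ^ (n - y)"
  shows "spectral_radius (map_mat complex_of_real (add_edge_weight (stem_bud n y a) e w)) < 1"
proof (rule spectral_radius_stem_bud_supported_less_1)
  show "add_edge_weight (stem_bud n y a) e w \<in> carrier_mat n n"
    by (simp add: add_edge_weight_def stem_bud_def)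
  show "stem_bud_supported n y (add_edge_weight (stem_bud n y a) e w)"
    using e y(1) by (rule stem_bud_supported_add_bud_edge)
  show "\<bar>bud_cycle_weight n y (add_edge_weight (stem_bud n y a) e w)\<bar> < 1"
    unfolding bud_cycle_weight_add_bud_edge[OF e y]
    using power_mult_add_less_one[OF a _ _ bound] w y by simp
qed (use y in auto)

lemma ctrb_gramian_single_input_diag:
  fixes P :: "real mat"
  assumes P: "P \<in> carrier_mat n n" and b: "b \<in> carrier_vec n" and i: "i < n"
  shows "(P * mat_of_cols n [b] * transpose_mat (mat_of_cols n [b]) * transpose_mat P) $$ (i, i)
           = ((P *\<^sub>v b) $ i)\<^sup>2"
proof -
  let ?B = "mat_of_cols n [b]"
  have B: "?B \<in> carrier_mat n 1"
    using mat_of_cols_carrier(1)[of n "[b]"] by simp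
  have "P * ?B * transpose_mat ?B * transpose_mat P = (P * ?B) * (transpose_mat ?B * transpose_mat P)"
    using P B by (intro assoc_mult_mat[of _ n 1 _ n]) auto
  also have "\<dots> = (P * ?B) * transpose_mat (P * ?B)"
    using transpose_mult[OF P B] by simp
  finally have outer: "P * ?B * transpose_mat ?B * transpose_mat P = (P * ?B) * transpose_mat (P * ?B)" .
  have "row (P * ?B) i = vec 1 (\<lambda>_. (P *\<^sub>v b) $ i)"
    using P b i B by (intro eq_vecI) (auto simp: mult_mat_vec_def)
  then show ?thesis
    unfolding outer using P i by (simp add: scalar_prod_def power2_eq_square)
qed

lemma mat_trace_ctrb_gramian_single_input:
  fixes A :: "real mat"
  assumes A: "A \<in> carrier_mat n n" and b: "b \<in> carrier_vec n"
  shows "mat_trace (ctrb_gramian A (mat_of_cols n [b]) T) = (\<Sum>t<T. \<Sum>i<n. ((A ^\<^sub>m t *\<^sub>v b) $ i)\<^sup>2)"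
proof -
  have dim: "dim_row A = n"
    using A by simp
  have "mat_trace (ctrb_gramian A (mat_of_cols n [b]) T)
      = (\<Sum>i<n. \<Sum>t<T. ((A ^\<^sub>m t *\<^sub>v b) $ i)\<^sup>2)"
    unfolding mat_trace_def
  proof (rule sum.cong)
    fix i assume "i \<in> {..<n}"
    then show "ctrb_gramian A (mat_of_cols n [b]) T $$ (i, i) = (\<Sum>t<T. ((A ^\<^sub>m t *\<^sub>v b) $ i)\<^sup>2)"
      unfolding ctrb_gramian_def dim using A b
      by (simp del: index_mult_mat add: ctrb_gramian_single_input_diag)
  qed (simp add: ctrb_gramian_def dim)
  then show ?thesis
    by (simp add: sum.swap[of _ "{..<n}"])
qed

lemma stem_bud_mult_unit_vec:
  assumes p: "p < n" and y: "y \<le> n"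
  shows "stem_bud n y a *\<^sub>v unit_vec n p = a \<cdot>\<^sub>v unit_vec n (if p = n - 1 then y - 1 else p + 1)"
proof (rule eq_vecI)
  have A: "stem_bud n y a \<in> carrier_mat n n"
    by (simp add: stem_bud_def)
  fix i
  assume "i < dim_vec (a \<cdot>\<^sub>v unit_vec n (if p = n - 1 then y - 1 else p + 1))"
  then have i: "i < n"
    by simp
  have "(stem_bud n y a *\<^sub>v unit_vec n p) $ i = stem_bud n y a $$ (i, p)"
    using A i p by simp
  also have "\<dots> = (if i = p + 1 \<or> (i = y - 1 \<and> p = n - 1) then a else 0)"
    using i p unfolding stem_bud_def by simp
  also have "\<dots> = (a \<cdot>\<^sub>v unit_vec n (if p = n - 1 then y - 1 else p + 1)) $ i"
    using i p y by (cases "p = n - 1") auto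
  finally show "(stem_bud n y a *\<^sub>v unit_vec n p) $ i = \<dots>" .
next
  show "dim_vec (stem_bud n y a *\<^sub>v unit_vec n p) = dim_vec (a \<cdot>\<^sub>v unit_vec n (if p = n - 1 then y - 1 else p + 1))"
    by (simp add: stem_bud_def)
qed

lemma stem_bud_pow_mult_unit_vec:
  assumes "p < n" and "y \<le> n"
  shows "\<exists>q<n. stem_bud n y a ^\<^sub>m t *\<^sub>v unit_vec n p = a ^ t \<cdot>\<^sub>v unit_vec n q"
  using assms(1)
proof (induction t arbitrary: p)
  case 0
  have "dim_row (stem_bud n y a) = n"
    by (simp add: stem_bud_def)
  then have "stem_bud n y a ^\<^sub>m 0 *\<^sub>v unit_vec n p = a ^ 0 \<cdot>\<^sub>v unit_vec n p"
    by simp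
  then show ?case
    using 0 by blast
next
  case (Suc t)
  let ?A = "stem_bud n y a"
  define p' where "p' = (if p = n - 1 then y - 1 else p + 1)"
  have "p' < n"
    using Suc.prems assms(2) unfolding p'_def by auto
  then obtain q where q: "q < n" "?A ^\<^sub>m t *\<^sub>v unit_vec n p' = a ^ t \<cdot>\<^sub>v unit_vec n q"
    using Suc.IH by blast
  have A: "?A \<in> carrier_mat n n"
    by (simp add: stem_bud_def)
  have "?A ^\<^sub>m Suc t *\<^sub>v unit_vec n p = ?A ^\<^sub>m t *\<^sub>v (?A *\<^sub>v unit_vec n p)"
    using assoc_mult_mat_vec[OF pow_carrier_mat[OF A] A unit_vec_carrier] by simp
  also have "\<dots> = ?A ^\<^sub>m t *\<^sub>v (a \<cdot>\<^sub>v unit_vec n p')"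
    by (simp add: stem_bud_mult_unit_vec[OF Suc.prems assms(2)] p'_def)
  also have "\<dots> = a \<cdot>\<^sub>v (?A ^\<^sub>m t *\<^sub>v unit_vec n p')"
    by (rule mult_mat_vec[OF pow_carrier_mat[OF A] unit_vec_carrier])
  also have "\<dots> = a ^ Suc t \<cdot>\<^sub>v unit_vec n q"
    unfolding q(2) by (simp add: smult_smult_assoc)
  finally show ?case
    using q(1) by blast
qed

lemma sum_power2_unit_vec:
  assumes "q < n"
  shows "(\<Sum>i<n. ((c \<cdot>\<^sub>v unit_vec n q) $ i)\<^sup>2) = (c :: 'a::comm_ring_1)\<^sup>2"
proof -
  have "(\<Sum>i<n. ((c \<cdot>\<^sub>v unit_vec n q) $ i)\<^sup>2) = (\<Sum>i<n. if i = q then c\<^sup>2 else 0)"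
    using assms by (intro sum.cong) auto
  then show ?thesis
    using assms by simp
qed

lemma mat_trace_ctrb_gramian_stem_bud:
  assumes "0 < n" and "y \<le> n"
  shows "mat_trace (ctrb_gramian (stem_bud n y a) (mat_of_cols n [unit_vec n 0]) T) = (\<Sum>t<T. (a ^ t)\<^sup>2)"
proof -
  have A: "stem_bud n y a \<in> carrier_mat n n"
    by (simp add: stem_bud_def)
  have "mat_trace (ctrb_gramian (stem_bud n y a) (mat_of_cols n [unit_vec n 0]) T)
      = (\<Sum>t<T. \<Sum>i<n. ((stem_bud n y a ^\<^sub>m t *\<^sub>v unit_vec n 0) $ i)\<^sup>2)"
    by (rule mat_trace_ctrb_gramian_single_input[OF A unit_vec_carrier])
  also have "\<dots> = (\<Sum>t<T. (a ^ t)\<^sup>2)"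
  proof (rule sum.cong[OF refl])
    fix t
    obtain q where "q < n" "stem_bud n y a ^\<^sub>m t *\<^sub>v unit_vec n 0 = a ^ t \<cdot>\<^sub>v unit_vec n q"
      using stem_bud_pow_mult_unit_vec[OF assms] by blast
    then show "(\<Sum>i<n. ((stem_bud n y a ^\<^sub>m t *\<^sub>v unit_vec n 0) $ i)\<^sup>2) = (a ^ t)\<^sup>2"
      using sum_power2_unit_vec by simp
  qed
  finally show ?thesis .
qed

lemma sum_power2_le_geometric:
  fixes a :: real
  assumes "0 \<le> a" "a < 1"
  shows "(\<Sum>t<T. (a ^ t)\<^sup>2) \<le> 1 / (1 - a\<^sup>2)"
proof -
  have a2: "0 \<le> a\<^sup>2" "a\<^sup>2 < 1"
    using assms by (auto simp: abs_square_less_1)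
  have "(\<Sum>t<T. (a ^ t)\<^sup>2) = (\<Sum>t<T. (a\<^sup>2) ^ t)"
    by (metis power_mult mult.commute)
  also have "\<dots> = (1 - (a\<^sup>2) ^ T) / (1 - a\<^sup>2)"
    using a2 by (simp add: sum_gp_strict)
  also have "\<dots> \<le> 1 / (1 - a\<^sup>2)"
    using a2 by (intro divide_right_mono) auto
  finally show ?thesis .
qed

lemma one_minus_power_sq_le:
  fixes b :: real
  assumes "0 \<le> b" "b \<le> 1"
  shows "(1 - b)\<^sup>2 \<le> 1 - b\<^sup>2"
  using assms by (simp add: power2_eq_square algebra_simps mult_left_le_one_le)

lemma sum_power_even_block:
  fixes a :: real
  assumes "a\<^sup>2 \<noteq> 1" and "m \<le> l"
  shows "(\<Sum>k=m..l. a ^ (2 * k)) = (a\<^sup>2) ^ m * (1 - (a\<^sup>2) ^ Suc (l - m)) / (1 - a\<^sup>2)"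
proof -
  have "(\<Sum>k=m..l. a ^ (2 * k)) = ((a\<^sup>2) ^ m - (a\<^sup>2) ^ Suc l) / (1 - a\<^sup>2)"
    using assms by (simp add: power_mult sum_gp)
  also have "(a\<^sup>2) ^ Suc l = (a\<^sup>2) ^ m * (a\<^sup>2) ^ Suc (l - m)"
    using \<open>m \<le> l\<close> by (simp flip: power_add)
  finally show ?thesis
    by (simp add: algebra_simps)
qed

lemma inverse_one_minus_power2_le_block_sum:
  fixes a :: real
  assumes a: "0 \<le> a" "a < 1" and "m \<le> l"
  shows "1 / (1 - a\<^sup>2) \<le> (\<Sum>k=0..<m. a ^ (2 * k)) + (\<Sum>k=m..l. a ^ (2 * k) / (1 - a ^ Suc (l - m))\<^sup>2)"
proof -
  define x where "x = a\<^sup>2"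
  define L where "L = Suc (l - m)"
  have x: "0 \<le> x" "x < 1"
    using a unfolding x_def by (auto simp: abs_square_less_1)
  have aL: "0 \<le> a ^ L" "a ^ L < 1"
    using a power_less_one_iff[OF a(1), of L] unfolding L_def by auto
  have xL: "x ^ L = (a ^ L)\<^sup>2"
    unfolding x_def by (metis power_mult mult.commute)
  have xL1: "x ^ L < 1"
    using aL unfolding xL by (simp add: abs_square_less_1)
  have head: "(\<Sum>k=0..<m. a ^ (2 * k)) = (1 - x ^ m) / (1 - x)"
    using x unfolding x_def by (simp add: power_mult atLeast0LessThan sum_gp_strict)
  have "x ^ m / (1 - x) = (\<Sum>k=m..l. a ^ (2 * k)) / (1 - x ^ L)"
    using x xL1 sum_power_even_block[of a m l] \<open>m \<le> l\<close> unfolding x_def L_def by simp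
  also have "\<dots> \<le> (\<Sum>k=m..l. a ^ (2 * k)) / (1 - a ^ L)\<^sup>2"
  proof (rule divide_left_mono)
    show "(1 - a ^ L)\<^sup>2 \<le> 1 - x ^ L"
      unfolding xL using aL by (intro one_minus_power_sq_le) auto
    show "0 \<le> (\<Sum>k=m..l. a ^ (2 * k))"
      using a by (intro sum_nonneg) simp
    show "0 < (1 - x ^ L) * (1 - a ^ L)\<^sup>2"
      using aL xL1 by simp
  qed
  also have "\<dots> = (\<Sum>k=m..l. a ^ (2 * k) / (1 - a ^ L)\<^sup>2)"
    by (simp add: sum_divide_distrib)
  finally have tail: "x ^ m / (1 - x) \<le> (\<Sum>k=m..l. a ^ (2 * k) / (1 - a ^ L)\<^sup>2)" .
  have "1 / (1 - a\<^sup>2) = (1 - x ^ m) / (1 - x) + x ^ m / (1 - x)"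
    using x unfolding x_def by (simp add: field_simps)
  then show ?thesis
    using head tail unfolding L_def by simp
qed

lemma mat_trace_ctrb_gramian_stem_bud_le:
  fixes a :: real
  assumes y: "1 \<le> y" "y < n" and a: "0 \<le> a" "a < 1"
  shows "mat_trace (ctrb_gramian (stem_bud n y a) (mat_of_cols n [unit_vec n 0]) T)
           \<le> (\<Sum>k=0..<y-1. a ^ (2*k)) + (\<Sum>k=y-1..n-1. a ^ (2*k) / (1 - a ^ (n - y + 1))^2)"
proof -
  have bud_length: "Suc (n - 1 - (y - 1)) = n - y + 1"
    using y by simp
  have "mat_trace (ctrb_gramian (stem_bud n y a) (mat_of_cols n [unit_vec n 0]) T) = (\<Sum>t<T. (a ^ t)\<^sup>2)"
    using y by (intro mat_trace_ctrb_gramian_stem_bud) auto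
  also have "\<dots> \<le> 1 / (1 - a\<^sup>2)"
    by (rule sum_power2_le_geometric[OF a])
  also have "\<dots> \<le> (\<Sum>k=0..<y-1. a ^ (2*k)) + (\<Sum>k=y-1..n-1. a ^ (2*k) / (1 - a ^ (n - y + 1))^2)"
    using inverse_one_minus_power2_le_block_sum[OF a, of "y - 1" "n - 1"] y
    unfolding bud_length by simp
  finally show ?thesis .
qed

theorem theorem5p6:
  fixes n y T :: nat and a :: real
  assumes "n \<ge> 2" and "1 \<le> y" and "y \<le> n - 1"
    and "0 \<le> a" and "a < 1" and "T \<ge> 1"
  defines "Lb \<equiv> n - y + 1"
  shows "(\<forall>e w. bud_edge n y e \<longrightarrow> 0 < w \<longrightarrow>
            (a = 0 \<or> w < (1 - a ^ Lb) / a ^ (Lb - 1)) \<longrightarrow>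
            spectral_radius (map_mat complex_of_real (add_edge_weight (stem_bud n y a) e w)) < 1)
       \<and> mat_trace (ctrb_gramian (stem_bud n y a) (mat_of_cols n [unit_vec n 0]) T)
           \<le> (\<Sum>k=0..<y-1. a ^ (2*k)) + (\<Sum>k=y-1..n-1. a ^ (2*k) / (1 - a ^ Lb)^2)"
proof -
  have y: "1 \<le> y" "y < n"
    using assms(1-3) by auto
  show ?thesis
    using spectral_radius_stem_bud_add_bud_edge_less_1[OF y assms(4)]
      mat_trace_ctrb_gramian_stem_bud_le[OF y assms(4,5), of T]
    unfolding Lb_def by auto
qed

end
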